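(* Fix positive constants $\varphi_{\max}, k_s, \rho_{\max}, k_v, \mu_{\max}, q_{\min}, \gamma, \beta$ and a substrate feed $s_{\text{in}}>0$. Fix $\alpha\in(0,1)$ and let $\mathcal{D}_\alpha=(0,\psi_\alpha(s_{\text{in}}))$. Then the function $$d\mapsto P_{\text{yield}}(\alpha,d)=\frac{\alpha\beta\gamma\left(s_{\text{in}}-\psi_\alpha^{-1}(d)\right)}{s_{\text{in}}\,\mu^{-1}(d)}$$ is strictly decreasing on $\mathcal{D}_\alpha$.
   Context: Let $\varphi(s)=\frac{\varphi_{\max}s}{k_s+s}$, $\rho(v)=\frac{\rho_{\max}v}{k_v+v}$ for $s,v\ge 0$, and $\mu(q)=\mu_{\max}\left(1-\frac{q_{\min}}{q}\right)$ for $q\ge q_{\min}$. Their inverses are $\varphi^{-1}(y)=\frac{k_s y}{\varphi_{\max}-y}$ for $0\le y<\varphi_{\max}$, $\rho^{-1}(y)=\frac{k_v y}{\rho_{\max}-y}$ for $0\le y<\rho_{\max}$, and $\mu^{-1}(y)=\frac{q_{\min}\mu_{\max}}{\mu_{\max}-y}$ for $0\le y<\mu_{\max}$. For $\alpha\in(0,1)$, the function $\psi_\alpha^{-1}$ is defined by $$\psi_\alpha^{-1}(y)=\varphi^{-1}\!\left(\frac{y}{1-\alpha}\right)+\frac{\rho^{-1}\!\left(y\,\mu^{-1}(y)\right)}{\alpha\beta\gamma}$$ on the set of $y\ge 0$ where all terms are defined (i.e. $y<(1-\alpha)\varphi_{\max}$, $y<\mu_{\max}$, $y\mu^{-1}(y)<\rho_{\max}$);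 it is strictly increasing from $0$ to $+\infty$, and $\psi_\alpha$ denotes its inverse function, an increasing function on $[0,\infty)$. In the underlying bioreactor model, $P_{\text{yield}}=c^*/s_{\text{in}}$ is the bioreactor yield at the coexistence steady state with algal biomass $c^*=\alpha\beta\gamma(s_{\text{in}}-\psi_\alpha^{-1}(d))/\mu^{-1}(d)$, which exists exactly when $0<d<\psi_\alpha(s_{\text{in}})$. *)

theory Defs
  imports Complex_Main
begin

definition phi_inv :: "real \<Rightarrow> real \<Rightarrow> real \<Rightarrow> real" where
  "phi_inv phimax ks y = ks * y / (phimax - y)"

definition rho_inv :: "real \<Rightarrow> real \<Rightarrow> real \<Rightarrow> real" where
  "rho_inv rhomax kv y = kv * y / (rhomax - y)"

definition mu_inv :: "real \<Rightarrow> real \<Rightarrow> real \<Rightarrow> real" where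
  "mu_inv mumax qmin y = qmin * mumax / (mumax - y)"

definition psi_dom :: "real \<Rightarrow> real \<Rightarrow> real \<Rightarrow> real \<Rightarrow> real \<Rightarrow> real set" where
  "psi_dom phimax rhomax mumax qmin alpha =
     {y. 0 \<le> y \<and> y < (1 - alpha) * phimax \<and> y < mumax \<and> y * mu_inv mumax qmin y < rhomax}"

definition psi_inv ::
  "real \<Rightarrow> real \<Rightarrow> real \<Rightarrow> real \<Rightarrow> real \<Rightarrow> real \<Rightarrow> real \<Rightarrow> real \<Rightarrow> real \<Rightarrow> real \<Rightarrow> real" where
  "psi_inv phimax ks rhomax kv mumax qmin gamma beta alpha y =
     phi_inv phimax ks (y / (1 - alpha))
     + rho_inv rhomax kv (y * mu_inv mumax qmin y) / (alpha * beta * gamma)"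

definition psi ::
  "real \<Rightarrow> real \<Rightarrow> real \<Rightarrow> real \<Rightarrow> real \<Rightarrow> real \<Rightarrow> real \<Rightarrow> real \<Rightarrow> real \<Rightarrow> real \<Rightarrow> real" where
  "psi phimax ks rhomax kv mumax qmin gamma beta alpha s =
     (THE y. y \<in> psi_dom phimax rhomax mumax qmin alpha \<and>
             psi_inv phimax ks rhomax kv mumax qmin gamma beta alpha y = s)"

definition P_yield ::
  "real \<Rightarrow> real \<Rightarrow> real \<Rightarrow> real \<Rightarrow> real \<Rightarrow> real \<Rightarrow> real \<Rightarrow> real \<Rightarrow> real \<Rightarrow> real \<Rightarrow> real \<Rightarrow> real" where
  "P_yield phimax ks rhomax kv mumax qmin gamma beta s_in alpha d =
     alpha * beta * gamma * (s_in - psi_inv phimax ks rhomax kv mumax qmin gamma beta alpha d)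
       / (s_in * mu_inv mumax qmin d)"

end

theory Submission
  imports Defs
begin

(*
  All three inverse uptake laws have the hyperbolic form k y / (v - y), and so does
  y * mu^-1(y) = qmin mumax y / (mumax - y). Hence psi_alpha^-1 is continuous and strictly
  increasing on its domain [0, b), vanishes at 0 and exceeds every bound near b, so by the
  intermediate value theorem psi_alpha(s_in) is the unique preimage of s_in. On
  (0, psi_alpha(s_in)) the numerator s_in - psi_alpha^-1(d) of the yield is therefore positive
  and strictly decreasing, while the denominator mu^-1(d) is positive and strictly increasing.
*)

(* The uptake laws phi and rho of the model are monod phimax ks and monod rhomax kv. *)

definition monod :: "real \<Rightarrow> real \<Rightarrow> real \<Rightarrow> real" where
  "monod vmax k s = vmax * s / (k + s)"

lemma monod_nonneg: "vmax > 0 \<Longrightarrow> k > 0 \<Longrightarrow> s \<ge> 0 \<Longrightarrow> 0 \<le> monod vmax k s"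
  by (simp add: monod_def)

lemma monod_less: "vmax > 0 \<Longrightarrow> k > 0 \<Longrightarrow> s \<ge> 0 \<Longrightarrow> monod vmax k s < vmax"
  by (simp add: monod_def field_simps)

lemma monod_strict_mono:
  assumes "vmax > 0" "k > 0"
  shows "strict_mono_on {0..} (monod vmax k)"
proof (rule strict_mono_onI)
  fix s t :: real assume "s \<in> {0..}" "t \<in> {0..}" "s < t"
  then have "vmax * s * (k + t) < vmax * t * (k + s)"
    using assms by (simp add: algebra_simps)
  then show "monod vmax k s < monod vmax k t"
    using \<open>s \<in> {0..}\<close> \<open>t \<in> {0..}\<close> assms by (simp add: monod_def field_simps)
qed

lemma phi_inv_nonneg: "k > 0 \<Longrightarrow> 0 \<le> y \<Longrightarrow> y < vmax \<Longrightarrow> 0 \<le> phi_inv vmax k y"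
  by (simp add: phi_inv_def)

lemma phi_inv_less_iff:
  assumes "k > 0" "y < vmax" "s \<ge> 0"
  shows "phi_inv vmax k y < s \<longleftrightarrow> y < monod vmax k s"
proof -
  have "phi_inv vmax k y < s \<longleftrightarrow> k * y < s * (vmax - y)"
    using assms by (simp add: phi_inv_def pos_divide_less_eq)
  also have "\<dots> \<longleftrightarrow> y * (k + s) < vmax * s" by (simp add: algebra_simps)
  also have "\<dots> \<longleftrightarrow> y < monod vmax k s"
    using assms by (simp add: monod_def pos_less_divide_eq)
  finally show ?thesis .
qed

lemma less_phi_inv_iff:
  assumes "k > 0" "y < vmax" "s \<ge> 0"
  shows "s < phi_inv vmax k y \<longleftrightarrow> monod vmax k s < y"
proof -
  have "s < phi_inv vmax k y \<longleftrightarrow> s * (vmax - y) < k * y"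
    using assms by (simp add: phi_inv_def pos_less_divide_eq)
  also have "\<dots> \<longleftrightarrow> vmax * s < y * (k + s)" by (simp add: algebra_simps)
  also have "\<dots> \<longleftrightarrow> monod vmax k s < y"
    using assms by (simp add: monod_def pos_divide_less_eq)
  finally show ?thesis .
qed

lemma phi_inv_strict_mono:
  assumes "k > 0"
  shows "strict_mono_on {0..<vmax} (phi_inv vmax k)"
proof (rule strict_mono_onI)
  fix y z :: real assume "y \<in> {0..<vmax}" "z \<in> {0..<vmax}" "y < z"
  then have "k * y * (vmax - z) < k * z * (vmax - y)"
    using assms by (simp add: algebra_simps)
  then show "phi_inv vmax k y < phi_inv vmax k z"
    using \<open>y \<in> {0..<vmax}\<close> \<open>z \<in> {0..<vmax}\<close> by (simp add: phi_inv_def divide_simps)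
qed

lemma rho_inv_eq_phi_inv: "rho_inv = phi_inv"
  by (simp add: fun_eq_iff rho_inv_def phi_inv_def)

lemma mult_mu_inv_eq_phi_inv: "y * mu_inv mumax qmin y = phi_inv mumax (qmin * mumax) y"
  by (simp add: mu_inv_def phi_inv_def)

lemma mu_inv_pos: "mumax > 0 \<Longrightarrow> qmin > 0 \<Longrightarrow> y < mumax \<Longrightarrow> 0 < mu_inv mumax qmin y"
  by (simp add: mu_inv_def)

lemma mu_inv_strict_mono:
  assumes "mumax > 0" "qmin > 0"
  shows "strict_mono_on {..<mumax} (mu_inv mumax qmin)"
  using assms by (intro strict_mono_onI) (simp add: mu_inv_def divide_simps)

lemma divide_strict_antimono_on:
  fixes f g :: "'a::order \<Rightarrow> 'b::linordered_field"
  assumes "strict_antimono_on S f" "strict_mono_on S g"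
    and "\<And>x. x \<in> S \<Longrightarrow> 0 < f x" "\<And>x. x \<in> S \<Longrightarrow> 0 < g x"
  shows "strict_antimono_on S (\<lambda>x. f x / g x)"
proof (rule monotone_onI)
  fix x y assume "x \<in> S" "y \<in> S" "x < y"
  then have "f y < f x" "g x < g y"
    using assms(1,2) by (auto dest: monotone_onD)
  then show "f y / g y < f x / g x"
    using assms(3,4) \<open>x \<in> S\<close> \<open>y \<in> S\<close> by (simp add: frac_less2)
qed

lemma the_eq_strict_mono_on:
  fixes f :: "'a::linorder \<Rightarrow> 'b::preorder"
  assumes "strict_mono_on A f" "x \<in> A" "f x = s"
  shows "(THE y. y \<in> A \<and> f y = s) = x"
  using assms by (auto intro!: the_equality dest: strict_mono_on_eqD)

locale bioreactor =
  fixes phimax ks rhomax kv mumax qmin gamma beta alpha :: real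
  assumes phimax_pos: "phimax > 0" and ks_pos: "ks > 0" and rhomax_pos: "rhomax > 0"
    and kv_pos: "kv > 0" and mumax_pos: "mumax > 0" and qmin_pos: "qmin > 0"
    and gamma_pos: "gamma > 0" and beta_pos: "beta > 0"
    and alpha_pos: "0 < alpha" and alpha_less_1: "alpha < 1"
begin

abbreviation D :: "real set" where
  "D \<equiv> psi_dom phimax rhomax mumax qmin alpha"

abbreviation F :: "real \<Rightarrow> real" where
  "F \<equiv> psi_inv phimax ks rhomax kv mumax qmin gamma beta alpha"

lemma alpha_beta_gamma_pos: "alpha * beta * gamma > 0"
  using alpha_pos beta_pos gamma_pos by simp

lemma psi_dom_eq: "D = {0..<min ((1 - alpha) * phimax) (monod mumax (qmin * mumax) rhomax)}"
proof -
  have "monod mumax (qmin * mumax) rhomax < mumax"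
    using mumax_pos qmin_pos rhomax_pos by (simp add: monod_less)
  moreover have "y * mu_inv mumax qmin y < rhomax \<longleftrightarrow> y < monod mumax (qmin * mumax) rhomax"
    if "y < mumax" for y
    using that mumax_pos qmin_pos rhomax_pos by (simp add: mult_mu_inv_eq_phi_inv phi_inv_less_iff)
  ultimately show ?thesis
    unfolding psi_dom_def by auto
qed

lemma psi_inv_strict_mono: "strict_mono_on D F"
proof (rule strict_mono_onI)
  fix y z assume "y \<in> D" "z \<in> D" "y < z"
  then have y: "0 \<le> y" "y < (1 - alpha) * phimax" "y < mumax" "y * mu_inv mumax qmin y < rhomax"
    and z: "0 \<le> z" "z < (1 - alpha) * phimax" "z < mumax" "z * mu_inv mumax qmin z < rhomax"
    by (auto simp: psi_dom_def)
  have "y / (1 - alpha) < z / (1 - alpha)"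
    using \<open>y < z\<close> alpha_less_1 by (simp add: divide_strict_right_mono)
  moreover have "y / (1 - alpha) \<in> {0..<phimax}" "z / (1 - alpha) \<in> {0..<phimax}"
    using y z alpha_less_1 by (auto simp: pos_divide_less_eq mult.commute)
  ultimately have phi: "phi_inv phimax ks (y / (1 - alpha)) < phi_inv phimax ks (z / (1 - alpha))"
    using monotone_onD[OF phi_inv_strict_mono[OF ks_pos]] by blast
  have "y * mu_inv mumax qmin y < z * mu_inv mumax qmin z"
    using monotone_onD[OF phi_inv_strict_mono[of "qmin * mumax" mumax]] y z \<open>y < z\<close>
      mumax_pos qmin_pos by (simp add: mult_mu_inv_eq_phi_inv)
  moreover have "y * mu_inv mumax qmin y \<in> {0..<rhomax}" "z * mu_inv mumax qmin z \<in> {0..<rhomax}"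
    using y z qmin_pos mumax_pos by (auto simp: mu_inv_def)
  ultimately have "rho_inv rhomax kv (y * mu_inv mumax qmin y) < rho_inv rhomax kv (z * mu_inv mumax qmin z)"
    using monotone_onD[OF phi_inv_strict_mono[OF kv_pos]] by (simp add: rho_inv_eq_phi_inv)
  with phi alpha_beta_gamma_pos show "F y < F z"
    unfolding psi_inv_def by (simp add: add_strict_mono divide_strict_right_mono)
qed

lemma psi_inv_continuous_on: "continuous_on D F"
proof -
  have mu: "continuous_on D (mu_inv mumax qmin)"
    unfolding mu_inv_def by (intro continuous_intros) (auto simp: psi_dom_def)
  show ?thesis
    unfolding psi_inv_def phi_inv_def rho_inv_def
  proof (intro continuous_intros mu ballI)
    fix y assume "y \<in> D"
    then show "phimax - y / (1 - alpha) \<noteq> 0" "rhomax - y * mu_inv mumax qmin y \<noteq> 0"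
      using alpha_less_1 by (auto simp: psi_dom_def pos_divide_less_eq mult.commute)
  qed (use alpha_beta_gamma_pos alpha_less_1 in auto)
qed

lemma psi_inv_zero: "F 0 = 0"
  by (simp add: psi_inv_def phi_inv_def rho_inv_def)

lemma psi_inv_unbounded:
  assumes "s > 0"
  shows "\<exists>y\<in>D. s < F y"
proof -
  (* Beyond c1 the phi-summand of F exceeds s, beyond c2 the rho-summand does. *)
  define S where "S = s * (alpha * beta * gamma)"
  define c1 where "c1 = (1 - alpha) * monod phimax ks s"
  define c2 where "c2 = monod mumax (qmin * mumax) (monod rhomax kv S)"
  have S: "S > 0" using assms alpha_beta_gamma_pos by (simp add: S_def)
  have "monod rhomax kv S < rhomax" "0 \<le> monod rhomax kv S"
    using S rhomax_pos kv_pos by (simp_all add: monod_less monod_nonneg)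
  then have c2: "c2 < monod mumax (qmin * mumax) rhomax" "0 \<le> c2"
    using monotone_onD[OF monod_strict_mono[of mumax "qmin * mumax"]] mumax_pos qmin_pos rhomax_pos
    by (simp_all add: c2_def monod_nonneg)
  have c1: "c1 < (1 - alpha) * phimax" "0 \<le> c1"
    using assms phimax_pos ks_pos alpha_less_1 by (simp_all add: c1_def monod_less monod_nonneg)
  have "min c1 c2 < min ((1 - alpha) * phimax) (monod mumax (qmin * mumax) rhomax)"
    using c1 c2 by linarith
  then obtain y where y: "min c1 c2 < y" "y < min ((1 - alpha) * phimax) (monod mumax (qmin * mumax) rhomax)"
    using dense by blast
  then have "y \<in> D" using c1 c2 by (simp add: psi_dom_eq)
  then have dom: "0 \<le> y" "y / (1 - alpha) < phimax" "y < mumax" "y * mu_inv mumax qmin y < rhomax"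
    using alpha_less_1 by (auto simp: psi_dom_def pos_divide_less_eq mult.commute)
  have w: "0 \<le> y * mu_inv mumax qmin y"
    using dom mumax_pos qmin_pos by (simp add: mu_inv_def)
  have phi: "0 \<le> phi_inv phimax ks (y / (1 - alpha))"
    using dom ks_pos alpha_less_1 by (simp add: phi_inv_nonneg)
  have rho: "0 \<le> rho_inv rhomax kv (y * mu_inv mumax qmin y) / (alpha * beta * gamma)"
    using dom w kv_pos alpha_beta_gamma_pos by (simp add: rho_inv_eq_phi_inv phi_inv_nonneg)
  consider "c1 < y" | "c2 < y" using y(1) by linarith
  then have "s < F y"
  proof cases
    case 1
    then have "monod phimax ks s < y / (1 - alpha)"
      using alpha_less_1 by (simp add: c1_def pos_less_divide_eq mult.commute)
    then have "s < phi_inv phimax ks (y / (1 - alpha))"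
      using less_phi_inv_iff ks_pos dom assms by simp
    then show ?thesis using rho by (simp add: psi_inv_def)
  next
    case 2
    then have "monod rhomax kv S < y * mu_inv mumax qmin y"
      using less_phi_inv_iff[of "qmin * mumax" y mumax] dom mumax_pos qmin_pos rhomax_pos kv_pos S
      by (simp add: c2_def mult_mu_inv_eq_phi_inv monod_nonneg)
    then have "S < rho_inv rhomax kv (y * mu_inv mumax qmin y)"
      using less_phi_inv_iff kv_pos dom S by (simp add: rho_inv_eq_phi_inv)
    then have "s < rho_inv rhomax kv (y * mu_inv mumax qmin y) / (alpha * beta * gamma)"
      using alpha_beta_gamma_pos by (simp add: S_def pos_less_divide_eq)
    then show ?thesis using phi by (simp add: psi_inv_def)
  qed
  with \<open>y \<in> D\<close> show ?thesis ..
qed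

lemma psi_inv_surj:
  assumes "s > 0"
  obtains y where "y \<in> D" "F y = s"
proof -
  obtain t where t: "t \<in> D" "s < F t"
    using psi_inv_unbounded[OF assms] by blast
  then have "{0..t} \<subseteq> D" by (auto simp: psi_dom_eq)
  moreover have "0 \<le> t" using t by (simp add: psi_dom_eq)
  ultimately obtain y where "0 \<le> y" "y \<le> t" "F y = s"
    using IVT'[of F 0 s t] t psi_inv_zero assms continuous_on_subset[OF psi_inv_continuous_on]
    by auto
  with \<open>{0..t} \<subseteq> D\<close> that show ?thesis by auto
qed

lemma psi_eq: "y \<in> D \<Longrightarrow> F y = s \<Longrightarrow> psi phimax ks rhomax kv mumax qmin gamma beta alpha s = y"
  unfolding psi_def by (rule the_eq_strict_mono_on[OF psi_inv_strict_mono])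

lemma P_yield_strict_antimono:
  assumes "s_in > 0"
  shows "strict_antimono_on {0<..<psi phimax ks rhomax kv mumax qmin gamma beta alpha s_in}
           (P_yield phimax ks rhomax kv mumax qmin gamma beta s_in alpha)"
proof -
  obtain y0 where y0: "y0 \<in> D" "F y0 = s_in"
    using psi_inv_surj[OF assms] .
  define S where "S = {0<..<y0}"
  have "S \<subseteq> D" using y0 by (auto simp: S_def psi_dom_eq)
  then have "S \<subseteq> {..<mumax}" by (auto simp: psi_dom_def)
  have F_less: "F d < s_in" if "d \<in> S" for d
    using monotone_onD[OF psi_inv_strict_mono] that \<open>S \<subseteq> D\<close> y0 by (auto simp: S_def)
  have "strict_antimono_on S (\<lambda>d. alpha * beta * gamma * (s_in - F d))"
  proof (rule monotone_onI)
    fix x y assume "x \<in> S" "y \<in> S" "x < y"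
    then have "F x < F y"
      using monotone_onD[OF psi_inv_strict_mono] \<open>S \<subseteq> D\<close> by blast
    then show "alpha * beta * gamma * (s_in - F y) < alpha * beta * gamma * (s_in - F x)"
      using alpha_beta_gamma_pos by (simp add: mult_strict_left_mono)
  qed
  moreover have "strict_mono_on S (\<lambda>d. s_in * mu_inv mumax qmin d)"
    using monotone_on_subset[OF mu_inv_strict_mono[OF mumax_pos qmin_pos] \<open>S \<subseteq> {..<mumax}\<close>] assms
    by (auto intro!: monotone_onI dest: monotone_onD)
  moreover have "0 < alpha * beta * gamma * (s_in - F d)" if "d \<in> S" for d
    using F_less[OF that] alpha_beta_gamma_pos by simp
  moreover have "0 < s_in * mu_inv mumax qmin d" if "d \<in> S" for d
    using that \<open>S \<subseteq> {..<mumax}\<close> assms mumax_pos qmin_pos by (auto simp: mu_inv_pos)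
  ultimately show ?thesis
    unfolding P_yield_def psi_eq[OF y0] S_def[symmetric] by (rule divide_strict_antimono_on)
qed

end

theorem mainTheorem1:
  fixes phimax ks rhomax kv mumax qmin gamma beta s_in alpha :: real
  assumes "phimax > 0" "ks > 0" "rhomax > 0" "kv > 0" "mumax > 0" "qmin > 0"
    "gamma > 0" "beta > 0" "s_in > 0" "0 < alpha" "alpha < 1"
  shows "strict_antimono_on {0<..<psi phimax ks rhomax kv mumax qmin gamma beta alpha s_in}
           (P_yield phimax ks rhomax kv mumax qmin gamma beta s_in alpha)"
proof -
  interpret bioreactor phimax ks rhomax kv mumax qmin gamma beta alpha
    using assms by unfold_locales
  show ?thesis using P_yield_strict_antimono[OF \<open>s_in > 0\<close>] .
qed

end
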